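(* Let $p_1,p_2\ge1$ be integers and let $0\le\alpha_1<p_1$, $0\le\alpha_2<p_2$. Then for every $k\in\mathbb R$, $$\int_{\mathbb R} D^{\alpha_1}_{-\infty,x}\phi_{p_1}(x)\,D^{\alpha_2}_{x,+\infty}\phi_{p_2}(x+k)\,dx = D^{\alpha_1+\alpha_2}_{-\infty,x}\phi_{p_1+p_2+1}(p_2+1-k),$$ $$\int_{\mathbb R} D^{\alpha_1}_{x,+\infty}\phi_{p_1}(x)\,D^{\alpha_2}_{-\infty,x}\phi_{p_2}(x+k)\,dx = D^{\alpha_1+\alpha_2}_{x,+\infty}\phi_{p_1+p_2+1}(p_2+1-k),$$ where $D^{\beta}_{\cdot}\phi_q(y)$ denotes the fractional derivative (as a function of $x$) evaluated at $x=y$.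
   Context: The cardinal B-spline $\phi_p:\mathbb R\to\mathbb R$ is defined by $\phi_0(t)=1$ for $t\in[0,1)$, $\phi_0(t)=0$ otherwise, and $\phi_p(t)=\frac{t}{p}\phi_{p-1}(t)+\frac{p+1-t}{p}\phi_{p-1}(t-1)$ for $p\ge1$; it belongs to $C^{p-1}(\mathbb R)$ and is supported on $[0,p+1]$. For a compactly supported function $u$ with absolutely continuous $(m-1)$-th derivative on $\mathbb R$, where $m$ is the integer with $m-1\le\alpha<m$, the half-axis Riemann–Liouville fractional derivatives are $D^{\alpha}_{-\infty,x}u(x)=\frac{1}{\Gamma(m-\alpha)}\frac{d^m}{dx^m}\int_{-\infty}^x (x-y)^{m-\alpha-1}u(y)\,dy$ and $D^{\alpha}_{x,+\infty}u(x)=\frac{(-1)^m}{\Gamma(m-\alpha)}\frac{d^m}{dx^m}\int_x^{+\infty}(y-x)^{m-\alpha-1}u(y)\,dy$. *)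

theory Defs
  imports "HOL-Analysis.Analysis"
begin

text \<open>Cardinal B-spline phi_p, defined by the Cox--de Boor recursion.\<close>
fun bspline :: "nat \<Rightarrow> real \<Rightarrow> real" where
  "bspline 0 t = (if 0 \<le> t \<and> t < 1 then 1 else 0)"
| "bspline (Suc p) t =
     t / real (Suc p) * bspline p t + (real (Suc p) + 1 - t) / real (Suc p) * bspline p (t - 1)"

definition frac_ord :: "real \<Rightarrow> nat" where
  "frac_ord \<alpha> = nat \<lfloor>\<alpha>\<rfloor> + 1"

definition RL_left :: "real \<Rightarrow> (real \<Rightarrow> real) \<Rightarrow> real \<Rightarrow> real" where
  "RL_left \<alpha> u x =
     (deriv ^^ frac_ord \<alpha>)
       (\<lambda>z. integral {..z} (\<lambda>y. (z - y) powr (real (frac_ord \<alpha>) - \<alpha> - 1) * u y)) x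
     / Gamma (real (frac_ord \<alpha>) - \<alpha>)"

definition RL_right :: "real \<Rightarrow> (real \<Rightarrow> real) \<Rightarrow> real \<Rightarrow> real" where
  "RL_right \<alpha> u x =
     (-1) ^ frac_ord \<alpha> / Gamma (real (frac_ord \<alpha>) - \<alpha>) *
     (deriv ^^ frac_ord \<alpha>)
       (\<lambda>z. integral {z..} (\<lambda>y. (y - z) powr (real (frac_ord \<alpha>) - \<alpha> - 1) * u y)) x"

end

(* Every function in the theorem is a generalized B-spline: the (p+1)-st backward difference of the
   truncated power x_+^gamma, divided by Gamma(gamma + 1); phi_p is the case gamma = p.  The fractional
   integral inside a Riemann-Liouville derivative of order alpha is a Beta integral, mapping x_+^gamma
   to a multiple of x_+^(gamma + m - alpha), and the m remaining derivatives then lower the exponent to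
   gamma - alpha.  The integrals in the theorem are convolutions of two such splines: the Beta integral
   convolves truncated powers, x_+^a * x_+^b = B(a + 1, b + 1) x_+^(a + b + 1), and Vandermonde's identity
   merges the two difference operators into one of order p1 + p2 + 2. *)

theory Submission
  imports Defs
begin

definition trunc_powr :: "real \<Rightarrow> real \<Rightarrow> real" where
  "trunc_powr a t = (if 0 < t then t powr a else 0)"

lemma trunc_powr_beta_integral_Icc:
  assumes a: "a > -1" and b: "b > -1" and us: "u < s"
  shows "((\<lambda>x. trunc_powr a (x - u) * trunc_powr b (s - x)) has_integral
           Beta (a + 1) (b + 1) * trunc_powr (a + b + 1) (s - u)) {u..s}"
proof -
  define L where "L = s - u"
  have L: "L > 0"
    using us by (simp add: L_def)
  have beta: "((\<lambda>t. t powr a * (1 - t) powr b) has_integral Beta (a + 1) (b + 1)) (cbox 0 1)"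
    using has_integral_Beta_real[of "a + 1" "b + 1"] a b by simp
  have "((\<lambda>x. (\<lambda>t. t powr a * (1 - t) powr b) ((1 / L) *\<^sub>R x + (- u / L)))
          has_integral (Beta (a + 1) (b + 1) /\<^sub>R (1 / L) ^ DIM(real)))
          (cbox ((0 - (- u / L)) /\<^sub>R (1 / L)) ((1 - (- u / L)) /\<^sub>R (1 / L)))"
    by (rule has_integral_affinity'[OF beta]) (use L in simp)
  also have "cbox ((0 - (- u / L)) /\<^sub>R (1 / L)) ((1 - (- u / L)) /\<^sub>R (1 / L)) = {u..s}"
    using L by (simp add: L_def field_simps)
  finally have "((\<lambda>x. ((x - u) / L) powr a * (1 - (x - u) / L) powr b) has_integral L * Beta (a + 1) (b + 1))
      {u..s}"
    by (simp add: field_simps diff_divide_distrib)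
  from has_integral_mult_right[OF this, of "L powr (a + b)"]
  have scaled: "((\<lambda>x. L powr (a + b) * (((x - u) / L) powr a * (1 - (x - u) / L) powr b)) has_integral
      L powr (a + b) * (L * Beta (a + 1) (b + 1))) {u..s}" .
  show ?thesis
  proof (rule has_integral_eq_rhs, rule has_integral_cong[THEN iffD1, OF _ scaled])
    fix x assume x: "x \<in> {u..s}"
    show "L powr (a + b) * (((x - u) / L) powr a * (1 - (x - u) / L) powr b)
        = trunc_powr a (x - u) * trunc_powr b (s - x)"
    proof (cases "x = u \<or> x = s")
      case True
      then show ?thesis
        using L by (auto simp: trunc_powr_def L_def)
    next
      case False
      then have pos: "x - u > 0" "s - x > 0"
        using x by auto
      have "1 - (x - u) / L = (s - x) / L"
        using L by (simp add: L_def field_simps)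
      then have "L powr (a + b) * (((x - u) / L) powr a * (1 - (x - u) / L) powr b)
          = (L powr a * L powr b) * ((x - u) powr a / L powr a * ((s - x) powr b / L powr b))"
        using pos L by (simp add: powr_divide powr_add)
      also have "\<dots> = (x - u) powr a * (s - x) powr b"
        using L by (simp add: field_simps)
      finally show ?thesis
        using pos by (simp add: trunc_powr_def)
    qed
  next
    have "L powr (a + b + 1) = L powr (a + b) * L"
      using L by (simp add: powr_add)
    then show "Beta (a + 1) (b + 1) * trunc_powr (a + b + 1) (s - u)
        = L powr (a + b) * (L * Beta (a + 1) (b + 1))"
      using L by (simp add: trunc_powr_def L_def[symmetric])
  qed
qed

lemma trunc_powr_beta_integral:
  assumes a: "a > -1" and b: "b > -1"
  shows "((\<lambda>x. trunc_powr a (x - u) * trunc_powr b (s - x)) has_integral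
           Beta (a + 1) (b + 1) * trunc_powr (a + b + 1) (s - u)) UNIV"
proof (cases "u < s")
  case True
  have "((\<lambda>x. if x \<in> {u..s} then trunc_powr a (x - u) * trunc_powr b (s - x) else 0) has_integral
           Beta (a + 1) (b + 1) * trunc_powr (a + b + 1) (s - u)) UNIV"
    using trunc_powr_beta_integral_Icc[OF a b True] by (simp only: has_integral_restrict_UNIV)
  moreover have "(\<lambda>x. if x \<in> {u..s} then trunc_powr a (x - u) * trunc_powr b (s - x) else 0)
      = (\<lambda>x. trunc_powr a (x - u) * trunc_powr b (s - x))"
    by (auto simp: trunc_powr_def)
  ultimately show ?thesis
    by simp
next
  case False
  then have "(\<lambda>x. trunc_powr a (x - u) * trunc_powr b (s - x)) = (\<lambda>x. 0)"
    by (auto simp: trunc_powr_def)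
  moreover have "trunc_powr (a + b + 1) (s - u) = 0"
    using False by (simp add: trunc_powr_def)
  ultimately show ?thesis
    by simp
qed

lemma has_real_derivative_trunc_powr:
  assumes "\<gamma> > 1"
  shows "(trunc_powr \<gamma> has_real_derivative \<gamma> * trunc_powr (\<gamma> - 1) t) (at t)"
proof (cases t "0 :: real" rule: linorder_cases)
  case greater
  have "((\<lambda>z. z powr \<gamma>) has_real_derivative \<gamma> * trunc_powr (\<gamma> - 1) t) (at t)"
    using has_real_derivative_powr[OF greater] greater by (simp add: trunc_powr_def)
  then show ?thesis
    by (rule has_field_derivative_transform_within_open[of _ _ _ "{0<..}"])
       (use greater in \<open>auto simp: trunc_powr_def\<close>)
next
  case less
  have "((\<lambda>z. 0) has_real_derivative \<gamma> * trunc_powr (\<gamma> - 1) t) (at t)"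
    using less by (simp add: trunc_powr_def)
  then show ?thesis
    by (rule has_field_derivative_transform_within_open[of _ _ _ "{..<0}"])
       (use less in \<open>auto simp: trunc_powr_def\<close>)
next
  case equal
  have "((\<lambda>y. trunc_powr \<gamma> y / y) \<longlongrightarrow> 0) (at 0)"
  proof (rule Lim_null_comparison)
    have "norm (trunc_powr \<gamma> y / y) \<le> \<bar>y\<bar> powr (\<gamma> - 1)" for y
    proof (cases "y > 0")
      case True
      then show ?thesis by (simp add: trunc_powr_def powr_diff)
    qed (simp add: trunc_powr_def)
    then show "\<forall>\<^sub>F y in at 0. norm (trunc_powr \<gamma> y / y) \<le> \<bar>y\<bar> powr (\<gamma> - 1)"
      by simp
    show "((\<lambda>y. \<bar>y\<bar> powr (\<gamma> - 1)) \<longlongrightarrow> 0) (at 0)"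
      by (rule tendsto_zero_powrI) (auto intro!: tendsto_eq_intros simp: assms)
  qed
  then show ?thesis
    using equal by (simp add: has_field_derivative_iff trunc_powr_def)
qed

lemma deriv_iterate_trunc_powr_sum:
  assumes "real m < \<gamma>"
  shows "(deriv ^^ m) (\<lambda>z. \<Sum>j\<in>J. c j * trunc_powr \<gamma> (\<sigma> * z + d j))
       = (\<lambda>z. \<sigma> ^ m * pochhammer (\<gamma> - m + 1) m
                * (\<Sum>j\<in>J. c j * trunc_powr (\<gamma> - m) (\<sigma> * z + d j)))"
  using assms
proof (induction m)
  case 0
  then show ?case by simp
next
  case (Suc m)
  let ?T = "\<lambda>k z. \<Sum>j\<in>J. c j * trunc_powr (\<gamma> - k) (\<sigma> * z + d j)"
  have IH: "(deriv ^^ m) (\<lambda>z. \<Sum>j\<in>J. c j * trunc_powr \<gamma> (\<sigma> * z + d j))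
      = (\<lambda>z. \<sigma> ^ m * pochhammer (\<gamma> - m + 1) m * ?T m z)"
    using Suc by simp
  have "((\<lambda>z. \<sigma> ^ m * pochhammer (\<gamma> - m + 1) m * ?T m z) has_real_derivative
         \<sigma> ^ Suc m * pochhammer (\<gamma> - Suc m + 1) (Suc m) * ?T (Suc m) z) (at z)" for z
  proof -
    have "((\<lambda>z. \<sigma> ^ m * pochhammer (\<gamma> - m + 1) m * ?T m z) has_real_derivative
           \<sigma> ^ m * pochhammer (\<gamma> - m + 1) m *
            (\<Sum>j\<in>J. c j * ((\<gamma> - m) * trunc_powr (\<gamma> - m - 1) (\<sigma> * z + d j) * \<sigma>))) (at z)"
      using Suc.prems
      by (intro DERIV_cmult DERIV_sum DERIV_chain2[OF has_real_derivative_trunc_powr])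
         (auto intro!: derivative_eq_intros)
    moreover have "pochhammer (\<gamma> - Suc m + 1) (Suc m) = (\<gamma> - m) * pochhammer (\<gamma> - m + 1) m"
      by (simp add: pochhammer_rec)
    moreover have "\<gamma> - m - 1 = \<gamma> - Suc m"
      by simp
    moreover have "s ^ m * P * (\<Sum>j\<in>J. c j * (g * T j * s))
        = s ^ Suc m * (g * P) * (\<Sum>j\<in>J. c j * T j)"
      for s P g :: real and T :: "'a \<Rightarrow> real"
      by (simp add: sum_distrib_left mult_ac)
    ultimately show ?thesis
      by (simp only:)
  qed
  then have "deriv (\<lambda>z. \<sigma> ^ m * pochhammer (\<gamma> - m + 1) m * ?T m z)
      = (\<lambda>z. \<sigma> ^ Suc m * pochhammer (\<gamma> - Suc m + 1) (Suc m) * ?T (Suc m) z)"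
    by (intro ext DERIV_imp_deriv)
  then show ?case
    by (simp add: IH)
qed

lemma of_nat_Suc_times_binomial_Suc:
  assumes "i \<le> Suc p"
  shows "(real i + 1) * real (Suc p choose Suc i) = (real p + 1 - real i) * real (Suc p choose i)"
proof -
  have "Suc i * (Suc p choose Suc i) = Suc p * (p choose i)"
    by (rule Suc_times_binomial)
  moreover have "(Suc p - i) * (Suc p choose i) = Suc p * (p choose i)"
    using binomial_absorb_comp[of "Suc p" i] by simp
  ultimately have "real (Suc i * (Suc p choose Suc i)) = real ((Suc p - i) * (Suc p choose i))"
    by (simp only:)
  then show ?thesis
    using assms by (simp only: of_nat_mult of_nat_diff of_nat_Suc) (simp add: algebra_simps)
qed

lemma alternating_binomial_sum_step:
  fixes X Y :: "nat \<Rightarrow> real"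
  shows "(\<Sum>j\<le>Suc p. (-1)^j * real (Suc p choose j) * (X j + real j * Y j))
       + (\<Sum>j\<le>Suc p. (-1)^j * real (Suc p choose j) * (- X (Suc j) + (real p + 1 - real j) * Y (Suc j)))
       = (\<Sum>j\<le>Suc (Suc p). (-1)^j * real (Suc (Suc p) choose j) * X j)"
proof -
  have extend: "(\<Sum>j\<le>Suc p. (-1)^j * real (Suc p choose j) * (X j + real j * Y j))
      = (\<Sum>j\<le>Suc (Suc p). (-1)^j * real (Suc p choose j) * (X j + real j * Y j))"
    by (subst (2) sum.atMost_Suc) (simp del: binomial_Suc_Suc)
  have shift1: "(\<Sum>j\<le>Suc (Suc p). (-1)^j * real (Suc p choose j) * (X j + real j * Y j))
      = X 0 + (\<Sum>i\<le>Suc p. (-1)^Suc i * real (Suc p choose Suc i) * (X (Suc i) + real (Suc i) * Y (Suc i)))"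
    by (subst sum.atMost_Suc_shift) simp
  have shift2: "(\<Sum>j\<le>Suc (Suc p). (-1)^j * real (Suc (Suc p) choose j) * X j)
      = X 0 + (\<Sum>i\<le>Suc p. (-1)^Suc i * real (Suc (Suc p) choose Suc i) * X (Suc i))"
    by (subst sum.atMost_Suc_shift) simp
  have "(\<Sum>i\<le>Suc p. (-1)^Suc i * real (Suc p choose Suc i) * (X (Suc i) + real (Suc i) * Y (Suc i)))
     + (\<Sum>j\<le>Suc p. (-1)^j * real (Suc p choose j) * (- X (Suc j) + (real p + 1 - real j) * Y (Suc j)))
     = (\<Sum>i\<le>Suc p. (-1)^Suc i * real (Suc (Suc p) choose Suc i) * X (Suc i))"
    unfolding sum.distrib[symmetric]
  proof (rule sum.cong[OF refl])
    fix i assume "i \<in> {..Suc p}"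
    then have binom: "(real i + 1) * real (Suc p choose Suc i) = (real p + 1 - real i) * real (Suc p choose i)"
      by (intro of_nat_Suc_times_binomial_Suc) simp
    have "(-1)^Suc i * real (Suc p choose Suc i) * (X (Suc i) + real (Suc i) * Y (Suc i))
       + (-1)^i * real (Suc p choose i) * (- X (Suc i) + (real p + 1 - real i) * Y (Suc i))
       = (-1)^Suc i * (real (Suc p choose Suc i) + real (Suc p choose i)) * X (Suc i)
         + (-1)^i * ((real p + 1 - real i) * real (Suc p choose i) - (real i + 1) * real (Suc p choose Suc i))
           * Y (Suc i)"
      by (simp add: algebra_simps)
    also have "\<dots> = (-1)^Suc i * real (Suc (Suc p) choose Suc i) * X (Suc i)"
      using binom by simp
    finally show "(-1)^Suc i * real (Suc p choose Suc i) * (X (Suc i) + real (Suc i) * Y (Suc i))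
       + (-1)^i * real (Suc p choose i) * (- X (Suc i) + (real p + 1 - real i) * Y (Suc i))
       = (-1)^Suc i * real (Suc (Suc p) choose Suc i) * X (Suc i)" .
  qed
  then show ?thesis
    unfolding extend shift1 shift2 by linarith
qed

text \<open>The two conventions at the breakpoints make the B-spline right-continuous, as phi_0 is.\<close>

definition trunc_power_ge :: "nat \<Rightarrow> real \<Rightarrow> real" where
  "trunc_power_ge n t = (if 0 \<le> t then t ^ n else 0)"

definition trunc_power_gt :: "nat \<Rightarrow> real \<Rightarrow> real" where
  "trunc_power_gt n t = (if 0 < t then t ^ n else 0)"

lemma bspline_eq_trunc_power_ge_sum:
  "bspline p t = (\<Sum>j\<le>Suc p. (-1)^j * real (Suc p choose j) * trunc_power_ge p (t - real j)) / fact p"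
proof (induction p arbitrary: t)
  case 0
  show ?case by (simp add: trunc_power_ge_def)
next
  case (Suc p)
  define X where "X j = trunc_power_ge (Suc p) (t - real j)" for j
  define Y where "Y j = trunc_power_ge p (t - real j)" for j
  define A where "A = (\<Sum>j\<le>Suc p. (-1)^j * real (Suc p choose j) * trunc_power_ge p (t - real j))"
  define A' where "A' = (\<Sum>j\<le>Suc p. (-1)^j * real (Suc p choose j) * trunc_power_ge p (t - 1 - real j))"
  have IH: "bspline p t = A / fact p" "bspline p (t - 1) = A' / fact p"
    unfolding A_def A'_def by (rule Suc.IH)+
  have rec: "bspline (Suc p) t = (t * A + (real p + 2 - t) * A') / fact (Suc p)"
    using fact_gt_zero[of p, where 'a=real]
    by (simp add: IH field_simps) (simp add: add_divide_distrib diff_divide_distrib)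
  have hX: "t * trunc_power_ge p (t - real j) = X j + real j * Y j" for j
    by (auto simp: X_def Y_def trunc_power_ge_def algebra_simps)
  have hY: "(real p + 2 - t) * trunc_power_ge p (t - 1 - real j)
      = - X (Suc j) + (real p + 1 - real j) * Y (Suc j)" for j
    by (auto simp: X_def Y_def trunc_power_ge_def algebra_simps)
  have "t * A + (real p + 2 - t) * A' = (\<Sum>j\<le>Suc (Suc p). (-1)^j * real (Suc (Suc p) choose j) * X j)"
    unfolding A_def A'_def alternating_binomial_sum_step[of p X Y, symmetric] sum_distrib_left
    by (intro arg_cong2[where f="(+)"] sum.cong refl)
       (subst hX[symmetric] hY[symmetric], simp only: mult_ac)+
  then show ?case
    unfolding rec by (simp add: X_def)
qed

lemma bspline_eq_trunc_power_gt_sum: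
  "bspline p t
     = (\<Sum>j\<le>Suc p. (-1)^j * real (Suc p choose j) * trunc_power_gt p (real p + 1 - real j - t)) / fact p"
proof (induction p arbitrary: t)
  case 0
  show ?case by (simp add: trunc_power_gt_def)
next
  case (Suc p)
  define X where "X j = trunc_power_gt (Suc p) (real p + 2 - real j - t)" for j
  define Y where "Y j = trunc_power_gt p (real p + 2 - real j - t)" for j
  define A where "A = (\<Sum>j\<le>Suc p. (-1)^j * real (Suc p choose j) * trunc_power_gt p (real p + 1 - real j - t))"
  define A' where
    "A' = (\<Sum>j\<le>Suc p. (-1)^j * real (Suc p choose j) * trunc_power_gt p (real p + 1 - real j - (t - 1)))"
  have IH: "bspline p t = A / fact p" "bspline p (t - 1) = A' / fact p"
    unfolding A_def A'_def by (rule Suc.IH)+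
  have rec: "bspline (Suc p) t = ((real p + 2 - t) * A' + t * A) / fact (Suc p)"
    using fact_gt_zero[of p, where 'a=real]
    by (simp add: IH field_simps) (simp add: add_divide_distrib diff_divide_distrib)
  have hX: "(real p + 2 - t) * trunc_power_gt p (real p + 1 - real j - (t - 1)) = X j + real j * Y j" for j
    by (auto simp: X_def Y_def trunc_power_gt_def algebra_simps)
  have hY: "t * trunc_power_gt p (real p + 1 - real j - t)
      = - X (Suc j) + (real p + 1 - real j) * Y (Suc j)" for j
    by (auto simp: X_def Y_def trunc_power_gt_def algebra_simps)
  have "(real p + 2 - t) * A' + t * A = (\<Sum>j\<le>Suc (Suc p). (-1)^j * real (Suc (Suc p) choose j) * X j)"
    unfolding A_def A'_def alternating_binomial_sum_step[of p X Y, symmetric] sum_distrib_left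
    by (intro arg_cong2[where f="(+)"] sum.cong refl)
       (subst hX[symmetric] hY[symmetric], simp only: mult_ac)+
  then show ?case
    unfolding rec X_def by (simp add: algebra_simps)
qed

definition frac_bspline :: "nat \<Rightarrow> real \<Rightarrow> real \<Rightarrow> real" where
  "frac_bspline p \<gamma> x
     = (\<Sum>j\<le>Suc p. (-1)^j * real (Suc p choose j) * trunc_powr \<gamma> (x - real j)) / Gamma (\<gamma> + 1)"

lemma bspline_eq_frac_bspline:
  assumes "p \<ge> 1"
  shows "bspline p = frac_bspline p (real p)"
proof -
  have "trunc_power_ge p s = trunc_powr (real p) s" for s
    using assms by (auto simp: trunc_power_ge_def trunc_powr_def powr_realpow)
  moreover have "Gamma (real p + 1) = fact p"
    using Gamma_fact[of p] by (simp add: add.commute)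
  ultimately show ?thesis
    by (simp add: fun_eq_iff bspline_eq_trunc_power_ge_sum frac_bspline_def)
qed

lemma bspline_eq_frac_bspline_reflected:
  assumes "p \<ge> 1"
  shows "bspline p = (\<lambda>t. frac_bspline p (real p) (real p + 1 - t))"
proof -
  have "trunc_power_gt p (real p + 1 - real j - t) = trunc_powr (real p) (real p + 1 - t - real j)" for j t
    using assms by (auto simp: trunc_power_gt_def trunc_powr_def powr_realpow algebra_simps)
  moreover have "Gamma (real p + 1) = fact p"
    using Gamma_fact[of p] by (simp add: add.commute)
  ultimately show ?thesis
    by (simp add: fun_eq_iff bspline_eq_trunc_power_gt_sum frac_bspline_def)
qed

lemma less_frac_ord:
  assumes "0 \<le> \<alpha>"
  shows "\<alpha> < real (frac_ord \<alpha>)"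
proof -
  have "real (frac_ord \<alpha>) = of_int \<lfloor>\<alpha>\<rfloor> + 1"
    using assms by (simp add: frac_ord_def)
  then show ?thesis
    by linarith
qed

lemma Beta_mult_pochhammer_div_Gamma:
  assumes "0 \<le> \<alpha>" and "\<alpha> < \<beta>" and "\<alpha> < real m"
  shows "Beta (\<beta> + 1) (real m - \<alpha>) * pochhammer (\<beta> - \<alpha> + 1) m / Gamma (real m - \<alpha>)
       = Gamma (\<beta> + 1) / Gamma (\<beta> - \<alpha> + 1)"
proof -
  have "\<beta> - \<alpha> + 1 \<notin> \<int>\<^sub>\<le>\<^sub>0"
    using assms by (auto elim!: nonpos_Ints_cases)
  from pochhammer_Gamma[OF this, of m]
  have "pochhammer (\<beta> - \<alpha> + 1) m = Gamma (\<beta> + 1 + (real m - \<alpha>)) / Gamma (\<beta> - \<alpha> + 1)"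
    by (simp add: algebra_simps)
  moreover have "Gamma (real m - \<alpha>) > 0" "Gamma (\<beta> - \<alpha> + 1) > 0" "Gamma (\<beta> + 1 + (real m - \<alpha>)) > 0"
    using assms by auto
  ultimately show ?thesis
    by (simp add: Beta_def field_simps)
qed

lemma RL_left_kernel_trunc_powr:
  assumes "\<nu> > -1" and "\<beta> > -1"
  shows "((\<lambda>y. (z - y) powr \<nu> * trunc_powr \<beta> (y - d)) has_integral
           Beta (\<beta> + 1) (\<nu> + 1) * trunc_powr (\<beta> + \<nu> + 1) (z - d)) {..z}"
proof (rule has_integral_restrict_UNIV[THEN iffD1])
  have "(\<lambda>y. if y \<in> {..z} then (z - y) powr \<nu> * trunc_powr \<beta> (y - d) else 0)
      = (\<lambda>y. trunc_powr \<beta> (y - d) * trunc_powr \<nu> (z - y))"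
    by (auto simp: trunc_powr_def)
  then show "((\<lambda>y. if y \<in> {..z} then (z - y) powr \<nu> * trunc_powr \<beta> (y - d) else 0) has_integral
      Beta (\<beta> + 1) (\<nu> + 1) * trunc_powr (\<beta> + \<nu> + 1) (z - d)) UNIV"
    using trunc_powr_beta_integral[OF assms(2,1), of d z] by (simp only:)
qed

lemma RL_right_kernel_trunc_powr:
  assumes "\<nu> > -1" and "\<beta> > -1"
  shows "((\<lambda>y. (y - z) powr \<nu> * trunc_powr \<beta> (d - y)) has_integral
           Beta (\<beta> + 1) (\<nu> + 1) * trunc_powr (\<beta> + \<nu> + 1) (d - z)) {z..}"
proof (rule has_integral_restrict_UNIV[THEN iffD1])
  have "(\<lambda>y. if y \<in> {z..} then (y - z) powr \<nu> * trunc_powr \<beta> (d - y) else 0)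
      = (\<lambda>y. trunc_powr \<nu> (y - z) * trunc_powr \<beta> (d - y))"
    by (auto simp: trunc_powr_def)
  moreover have "Beta (\<nu> + 1) (\<beta> + 1) * trunc_powr (\<nu> + \<beta> + 1) (d - z)
      = Beta (\<beta> + 1) (\<nu> + 1) * trunc_powr (\<beta> + \<nu> + 1) (d - z)"
    by (simp add: Beta_commute add_ac)
  ultimately show "((\<lambda>y. if y \<in> {z..} then (y - z) powr \<nu> * trunc_powr \<beta> (d - y) else 0) has_integral
      Beta (\<beta> + 1) (\<nu> + 1) * trunc_powr (\<beta> + \<nu> + 1) (d - z)) UNIV"
    using trunc_powr_beta_integral[OF assms, of z d] by (simp only:)
qed

lemma RL_left_trunc_powr_sum:
  assumes "finite J" and "0 \<le> \<alpha>" and "\<alpha> < \<beta>"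
  shows "RL_left \<alpha> (\<lambda>y. \<Sum>j\<in>J. c j * trunc_powr \<beta> (y - d j)) x
       = Gamma (\<beta> + 1) / Gamma (\<beta> - \<alpha> + 1) * (\<Sum>j\<in>J. c j * trunc_powr (\<beta> - \<alpha>) (x - d j))"
proof -
  define m where "m = frac_ord \<alpha>"
  define \<nu> where "\<nu> = real m - \<alpha> - 1"
  define B where "B = Beta (\<beta> + 1) (\<nu> + 1)"
  have bounds: "\<alpha> < real m" "\<nu> > -1"
    using less_frac_ord[OF assms(2)] by (auto simp: m_def \<nu>_def)
  have "integral {..z} (\<lambda>y. (z - y) powr \<nu> * (\<Sum>j\<in>J. c j * trunc_powr \<beta> (y - d j)))
      = (\<Sum>j\<in>J. (B * c j) * trunc_powr (\<beta> + \<nu> + 1) (z - d j))" for z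
    unfolding sum_distrib_left
    using assms bounds
    by (intro integral_unique has_integral_sum)
       (auto dest: has_integral_mult_right[OF RL_left_kernel_trunc_powr[of \<nu> \<beta> z "d _"], of "c _"]
             simp: B_def mult_ac)
  then have "RL_left \<alpha> (\<lambda>y. \<Sum>j\<in>J. c j * trunc_powr \<beta> (y - d j)) x
      = (deriv ^^ m) (\<lambda>z. \<Sum>j\<in>J. (B * c j) * trunc_powr (\<beta> + \<nu> + 1) (z - d j)) x / Gamma (real m - \<alpha>)"
    unfolding RL_left_def m_def[symmetric] \<nu>_def[symmetric] by (simp add: \<nu>_def)
  also have "\<dots> = B * pochhammer (\<beta> - \<alpha> + 1) m / Gamma (real m - \<alpha>)
                   * (\<Sum>j\<in>J. c j * trunc_powr (\<beta> - \<alpha>) (x - d j))"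
    using deriv_iterate_trunc_powr_sum[where m = m and \<gamma> = "\<beta> + \<nu> + 1" and J = J and c = "\<lambda>j. B * c j"
                                      and \<sigma> = 1 and d = "\<lambda>j. - d j"] bounds assms
    by (simp add: \<nu>_def sum_distrib_left mult_ac)
  also have "B * pochhammer (\<beta> - \<alpha> + 1) m / Gamma (real m - \<alpha>)
      = Gamma (\<beta> + 1) / Gamma (\<beta> - \<alpha> + 1)"
    unfolding B_def \<nu>_def using Beta_mult_pochhammer_div_Gamma[OF assms(2,3) bounds(1)] by simp
  finally show ?thesis .
qed

lemma RL_right_trunc_powr_sum:
  assumes "finite J" and "0 \<le> \<alpha>" and "\<alpha> < \<beta>"
  shows "RL_right \<alpha> (\<lambda>y. \<Sum>j\<in>J. c j * trunc_powr \<beta> (d j - y)) x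
       = Gamma (\<beta> + 1) / Gamma (\<beta> - \<alpha> + 1) * (\<Sum>j\<in>J. c j * trunc_powr (\<beta> - \<alpha>) (d j - x))"
proof -
  define m where "m = frac_ord \<alpha>"
  define \<nu> where "\<nu> = real m - \<alpha> - 1"
  define B where "B = Beta (\<beta> + 1) (\<nu> + 1)"
  have bounds: "\<alpha> < real m" "\<nu> > -1"
    using less_frac_ord[OF assms(2)] by (auto simp: m_def \<nu>_def)
  have "integral {z..} (\<lambda>y. (y - z) powr \<nu> * (\<Sum>j\<in>J. c j * trunc_powr \<beta> (d j - y)))
      = (\<Sum>j\<in>J. (B * c j) * trunc_powr (\<beta> + \<nu> + 1) (d j - z))" for z
    unfolding sum_distrib_left
    using assms bounds
    by (intro integral_unique has_integral_sum)
       (auto dest: has_integral_mult_right[OF RL_right_kernel_trunc_powr[of \<nu> \<beta> z "d _"], of "c _"]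
             simp: B_def mult_ac)
  then have "RL_right \<alpha> (\<lambda>y. \<Sum>j\<in>J. c j * trunc_powr \<beta> (d j - y)) x
      = (-1) ^ m / Gamma (real m - \<alpha>)
        * (deriv ^^ m) (\<lambda>z. \<Sum>j\<in>J. (B * c j) * trunc_powr (\<beta> + \<nu> + 1) (d j - z)) x"
    unfolding RL_right_def m_def[symmetric] \<nu>_def[symmetric] by (simp add: \<nu>_def)
  also have "\<dots> = B * pochhammer (\<beta> - \<alpha> + 1) m / Gamma (real m - \<alpha>)
                   * (\<Sum>j\<in>J. c j * trunc_powr (\<beta> - \<alpha>) (d j - x))"
    using deriv_iterate_trunc_powr_sum[where m = m and \<gamma> = "\<beta> + \<nu> + 1" and J = J and c = "\<lambda>j. B * c j"
                                      and \<sigma> = "-1" and d = d] bounds assms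
    by (simp add: \<nu>_def sum_distrib_left sum_divide_distrib mult_ac flip: power_add)
  also have "B * pochhammer (\<beta> - \<alpha> + 1) m / Gamma (real m - \<alpha>)
      = Gamma (\<beta> + 1) / Gamma (\<beta> - \<alpha> + 1)"
    unfolding B_def \<nu>_def using Beta_mult_pochhammer_div_Gamma[OF assms(2,3) bounds(1)] by simp
  finally show ?thesis .
qed

lemma RL_left_frac_bspline:
  assumes "0 \<le> \<alpha>" and "\<alpha> < \<beta>"
  shows "RL_left \<alpha> (frac_bspline p \<beta>) x = frac_bspline p (\<beta> - \<alpha>) x"
proof -
  define c where "c j = (-1)^j * real (Suc p choose j) / Gamma (\<beta> + 1)" for j
  have expand: "frac_bspline p \<beta> = (\<lambda>y. \<Sum>j\<le>Suc p. c j * trunc_powr \<beta> (y - real j))"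
    unfolding frac_bspline_def c_def sum_divide_distrib by (intro ext sum.cong refl) simp
  have "RL_left \<alpha> (frac_bspline p \<beta>) x
      = Gamma (\<beta> + 1) / Gamma (\<beta> - \<alpha> + 1) * (\<Sum>j\<le>Suc p. c j * trunc_powr (\<beta> - \<alpha>) (x - real j))"
    unfolding expand by (rule RL_left_trunc_powr_sum[OF finite_atMost assms])
  also have "\<dots> = frac_bspline p (\<beta> - \<alpha>) x"
  proof -
    have "Gamma (\<beta> + 1) \<noteq> 0"
      using assms by (intro Gamma_real_pos[THEN less_imp_neq, symmetric]) simp
    then show ?thesis
      unfolding frac_bspline_def c_def sum_distrib_left sum_divide_distrib
      by (intro sum.cong refl) simp
  qed
  finally show ?thesis .
qed

lemma RL_right_frac_bspline_reflected:
  assumes "0 \<le> \<alpha>" and "\<alpha> < \<beta>"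
  shows "RL_right \<alpha> (\<lambda>y. frac_bspline p \<beta> (real p + 1 - y)) x
       = frac_bspline p (\<beta> - \<alpha>) (real p + 1 - x)"
proof -
  define c where "c j = (-1)^j * real (Suc p choose j) / Gamma (\<beta> + 1)" for j
  have expand: "(\<lambda>y. frac_bspline p \<beta> (real p + 1 - y))
      = (\<lambda>y. \<Sum>j\<le>Suc p. c j * trunc_powr \<beta> ((real p + 1 - real j) - y))"
    unfolding frac_bspline_def c_def sum_divide_distrib by (intro ext sum.cong refl) (simp add: algebra_simps)
  have "RL_right \<alpha> (\<lambda>y. frac_bspline p \<beta> (real p + 1 - y)) x
      = Gamma (\<beta> + 1) / Gamma (\<beta> - \<alpha> + 1)
        * (\<Sum>j\<le>Suc p. c j * trunc_powr (\<beta> - \<alpha>) ((real p + 1 - real j) - x))"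
    unfolding expand by (rule RL_right_trunc_powr_sum[OF finite_atMost assms])
  also have "\<dots> = frac_bspline p (\<beta> - \<alpha>) (real p + 1 - x)"
  proof -
    have "Gamma (\<beta> + 1) \<noteq> 0"
      using assms by (intro Gamma_real_pos[THEN less_imp_neq, symmetric]) simp
    then show ?thesis
      unfolding frac_bspline_def c_def sum_distrib_left sum_divide_distrib
      by (intro sum.cong refl) (simp add: algebra_simps)
  qed
  finally show ?thesis .
qed

lemma RL_left_bspline:
  assumes "p \<ge> 1" and "0 \<le> \<alpha>" and "\<alpha> < real p"
  shows "RL_left \<alpha> (bspline p) = frac_bspline p (real p - \<alpha>)"
  using assms by (simp add: fun_eq_iff bspline_eq_frac_bspline RL_left_frac_bspline)

lemma RL_right_bspline:
  assumes "p \<ge> 1" and "0 \<le> \<alpha>" and "\<alpha> < real p"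
  shows "RL_right \<alpha> (bspline p) = (\<lambda>x. frac_bspline p (real p - \<alpha>) (real p + 1 - x))"
proof -
  have "RL_right \<alpha> (\<lambda>y. frac_bspline p (real p) (real p + 1 - y)) x
      = frac_bspline p (real p - \<alpha>) (real p + 1 - x)" for x
    using assms(2,3) by (rule RL_right_frac_bspline_reflected)
  then show ?thesis
    unfolding bspline_eq_frac_bspline_reflected[OF assms(1)] by (rule ext)
qed

lemma alternating_binomial_convolution:
  fixes F :: "nat \<Rightarrow> real"
  shows "(\<Sum>j\<le>n1. \<Sum>l\<le>n2. ((-1)^j * real (n1 choose j)) * ((-1)^l * real (n2 choose l)) * F (j + l))
       = (\<Sum>i\<le>n1 + n2. (-1)^i * real ((n1 + n2) choose i) * F i)"
proof -
  define h where "h j l = (-1)^(j+l) * real ((n1 choose j) * (n2 choose l)) * F (j + l)" for j l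
  define T where "T = {(i,j). i + j \<le> n1 + n2}"
  have fT: "finite T"
    by (rule finite_subset[of _ "{..n1+n2} \<times> {..n1+n2}"]) (auto simp: T_def)
  have "(\<Sum>j\<le>n1. \<Sum>l\<le>n2. ((-1)^j * real (n1 choose j)) * ((-1)^l * real (n2 choose l)) * F (j + l))
      = (\<Sum>j\<le>n1. \<Sum>l\<le>n2. h j l)"
    by (intro sum.cong refl) (simp add: h_def power_add mult_ac)
  also have "\<dots> = (\<Sum>(j,l)\<in>{..n1} \<times> {..n2}. h j l)"
    by (simp add: sum.cartesian_product)
  also have "\<dots> = (\<Sum>(j,l)\<in>T. h j l)"
    by (rule sum.mono_neutral_left[OF fT]) (auto simp: T_def h_def)
  also have "\<dots> = (\<Sum>i\<le>n1 + n2. \<Sum>j\<le>i. h j (i - j))"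
    unfolding T_def by (rule sum.triangle_reindex_eq)
  also have "\<dots> = (\<Sum>i\<le>n1 + n2. (-1)^i * real ((n1 + n2) choose i) * F i)"
  proof (intro sum.cong refl)
    fix i
    have "(\<Sum>j\<le>i. h j (i - j)) = (\<Sum>j\<le>i. (-1)^i * F i * real ((n1 choose j) * (n2 choose (i - j))))"
      by (intro sum.cong refl) (simp add: h_def)
    also have "\<dots> = (-1)^i * F i * real (\<Sum>j\<le>i. (n1 choose j) * (n2 choose (i - j)))"
      by (simp add: sum_distrib_left)
    also have "\<dots> = (-1)^i * real ((n1 + n2) choose i) * F i"
      by (simp add: vandermonde)
    finally show "(\<Sum>j\<le>i. h j (i - j)) = (-1)^i * real ((n1 + n2) choose i) * F i" .
  qed
  finally show ?thesis .
qed

lemma frac_bspline_convolution: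
  assumes a: "a > -1" and b: "b > -1"
  shows "((\<lambda>x. frac_bspline p a (x - u) * frac_bspline q b (s - x)) has_integral
           frac_bspline (p + q + 1) (a + b + 1) (s - u)) UNIV"
proof -
  define C where "C n j = (-1)^j * real (Suc n choose j)" for n j :: nat
  define G where "G = Gamma (a + 1) * Gamma (b + 1)"
  define F where "F i = trunc_powr (a + b + 1) (s - u - real i)" for i :: nat
  have expand: "frac_bspline p a (x - u) * frac_bspline q b (s - x)
      = (\<Sum>j\<le>Suc p. \<Sum>l\<le>Suc q. C p j * C q l / G
            * (trunc_powr a (x - (u + real j)) * trunc_powr b ((s - real l) - x)))" for x
    unfolding frac_bspline_def times_divide_times_eq sum_product sum_divide_distrib
    by (intro sum.cong refl) (simp add: C_def G_def algebra_simps)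
  have integral: "((\<lambda>x. \<Sum>j\<le>Suc p. \<Sum>l\<le>Suc q. C p j * C q l / G
            * (trunc_powr a (x - (u + real j)) * trunc_powr b ((s - real l) - x))) has_integral
        (\<Sum>j\<le>Suc p. \<Sum>l\<le>Suc q. C p j * C q l / G * (Beta (a + 1) (b + 1) * F (j + l)))) UNIV"
  proof (intro has_integral_sum finite_atMost has_integral_mult_right)
    fix j l :: nat
    show "((\<lambda>x. trunc_powr a (x - (u + real j)) * trunc_powr b ((s - real l) - x)) has_integral
          Beta (a + 1) (b + 1) * F (j + l)) UNIV"
      using trunc_powr_beta_integral[OF a b, of "u + real j" "s - real l"]
      by (simp add: F_def algebra_simps)
  qed
  have ratio: "Beta (a + 1) (b + 1) / G = 1 / Gamma (a + b + 1 + 1)"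
  proof -
    have "Gamma (a + 1) > 0" "Gamma (b + 1) > 0" "a + 1 + (b + 1) = a + b + 1 + 1"
      using a b by auto
    then show ?thesis
      by (simp add: Beta_def G_def)
  qed
  have "(\<Sum>j\<le>Suc p. \<Sum>l\<le>Suc q. C p j * C q l / G * (Beta (a + 1) (b + 1) * F (j + l)))
      = (\<Sum>j\<le>Suc p. \<Sum>l\<le>Suc q. C p j * C q l * F (j + l)) * (Beta (a + 1) (b + 1) / G)"
    unfolding sum_distrib_right by (intro sum.cong refl) simp
  also have "\<dots> = (\<Sum>j\<le>Suc p. \<Sum>l\<le>Suc q. C p j * C q l * F (j + l)) / Gamma (a + b + 1 + 1)"
    unfolding ratio by simp
  also have "\<dots> = frac_bspline (p + q + 1) (a + b + 1) (s - u)"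
  proof -
    have "Suc (p + q + 1) = Suc p + Suc q"
      by simp
    then show ?thesis
      unfolding frac_bspline_def C_def F_def[symmetric] alternating_binomial_convolution by (simp only:)
  qed
  finally have total: "(\<Sum>j\<le>Suc p. \<Sum>l\<le>Suc q. C p j * C q l / G * (Beta (a + 1) (b + 1) * F (j + l)))
      = frac_bspline (p + q + 1) (a + b + 1) (s - u)" .
  show ?thesis
    using integral by (simp only: expand total)
qed

theorem theorem3p3:
  fixes p1 p2 :: nat and \<alpha>1 \<alpha>2 k :: real
  assumes "p1 \<ge> 1" and "p2 \<ge> 1"
    and "0 \<le> \<alpha>1" and "\<alpha>1 < real p1"
    and "0 \<le> \<alpha>2" and "\<alpha>2 < real p2"
  shows "integral UNIV (\<lambda>x. RL_left \<alpha>1 (bspline p1) x * RL_right \<alpha>2 (bspline p2) (x + k))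
           = RL_left (\<alpha>1 + \<alpha>2) (bspline (p1 + p2 + 1)) (real p2 + 1 - k)
       \<and> integral UNIV (\<lambda>x. RL_right \<alpha>1 (bspline p1) x * RL_left \<alpha>2 (bspline p2) (x + k))
           = RL_right (\<alpha>1 + \<alpha>2) (bspline (p1 + p2 + 1)) (real p2 + 1 - k)"
proof -
  let ?a = "real p1 - \<alpha>1" and ?b = "real p2 - \<alpha>2" and ?N = "p1 + p2 + 1"
  have ab: "?a > -1" "?b > -1"
    using assms by auto
  have exponent: "real ?N - (\<alpha>1 + \<alpha>2) = ?a + ?b + 1"
    by simp
  have hN: "?N \<ge> 1" "0 \<le> \<alpha>1 + \<alpha>2" "\<alpha>1 + \<alpha>2 < real ?N"
    using assms by auto
  note N = RL_left_bspline[OF hN, unfolded exponent] RL_right_bspline[OF hN, unfolded exponent]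
  have "(\<lambda>x. RL_left \<alpha>1 (bspline p1) x * RL_right \<alpha>2 (bspline p2) (x + k))
      = (\<lambda>x. frac_bspline p1 ?a (x - 0) * frac_bspline p2 ?b ((real p2 + 1 - k) - x))"
    using assms by (simp add: RL_left_bspline RL_right_bspline algebra_simps)
  then have left: "((\<lambda>x. RL_left \<alpha>1 (bspline p1) x * RL_right \<alpha>2 (bspline p2) (x + k)) has_integral
      RL_left (\<alpha>1 + \<alpha>2) (bspline ?N) (real p2 + 1 - k)) UNIV"
    unfolding N using frac_bspline_convolution[OF ab, of p1 0 p2 "real p2 + 1 - k"] by simp
  have "(\<lambda>x. RL_right \<alpha>1 (bspline p1) x * RL_left \<alpha>2 (bspline p2) (x + k))
      = (\<lambda>x. frac_bspline p2 ?b (x - - k) * frac_bspline p1 ?a ((real p1 + 1) - x))"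
    using assms by (simp add: RL_left_bspline RL_right_bspline algebra_simps)
  then have right: "((\<lambda>x. RL_right \<alpha>1 (bspline p1) x * RL_left \<alpha>2 (bspline p2) (x + k)) has_integral
      RL_right (\<alpha>1 + \<alpha>2) (bspline ?N) (real p2 + 1 - k)) UNIV"
    unfolding N using frac_bspline_convolution[OF ab(2,1), of p2 "- k" p1 "real p1 + 1"]
    by (simp add: algebra_simps)
  show ?thesis
    using left right by (simp add: integral_unique)
qed

end
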